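(* Let $n\le 3$. For the house allocation setting with $n$ agents and $n$ houses described in the context, an assignment rule $f$ is support efficient if and only if it is ex post efficient.
   Context: Let $N$ be a set of $n$ agents and $H$ a set of $n$ houses. A preference profile $R$ assigns to each agent $i\in N$ a strict linear order $\succ_i$ over $H$; $\mathcal{R}$ denotes the set of all such profiles. A random assignment is a bistochastic $n\times n$ matrix $(M_{i,h})_{i\in N,h\in H}$ (nonnegative entries, all row and column sums equal to $1$); it is a deterministic assignment if all entries are in $\{0,1\}$. An assignment rule $f$ maps each $R\in\mathcal{R}$ to a random assignment $f(R)$; $f(R,i,h)$ is the probability that agent $i$ receives house $h$. A deterministic assignment $M$ is (Pareto) efficient at $R$ if there is no deterministic assignment $M'\ne M$ such that for all $i\in N$ and $h\neq h'$, $M'_{i,h'}=M_{i,h}=1$ implies $h'\succ_i h$. A rule $f$ is ex post efficient if for every $R$, $f(R)$ is a convex combination of deterministic assignments that are efficient at $R$. For a priority order $\pi$ of the agents, the serial dictatorship $SD_\pi$ lets agents in order $\pi$ successively pick their most preferred remaining house; random serial dictatorship is $RSD(R)=\frac{1}{n!}\sum_{\pi}SD_\pi(R)$, the sum over all $n!$ orders. A rule $f$ is support efficient if for all $R$, $i$, $h$: $RSD(R,i,h)=0$ implies $f(R,i,h)=0$. *)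

theory Defs
  imports Complex_Main "HOL-Combinatorics.Multiset_Permutations"
begin

text \<open>A preference of an agent is a
relation r on houses, (h, h') \<in> r meaning "h is strictly preferred to h'".\<close>

definition strict_pref :: "nat \<Rightarrow> (nat \<times> nat) set \<Rightarrow> bool" where
  "strict_pref n r \<longleftrightarrow> r \<subseteq> {..<n} \<times> {..<n} \<and> strict_linear_order_on {..<n} r"

definition profiles :: "nat \<Rightarrow> (nat \<Rightarrow> (nat \<times> nat) set) set" where
  "profiles n = {R. \<forall>i<n. strict_pref n (R i)}"

text \<open>A random assignment: bistochastic n x n matrix (entries outside the
index square are fixed to 0, so that matrices are determined by their n x n part).\<close>

definition random_assignment :: "nat \<Rightarrow> (nat \<Rightarrow> nat \<Rightarrow> real) \<Rightarrow> bool" where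
  "random_assignment n M \<longleftrightarrow>
     (\<forall>i h. 0 \<le> M i h) \<and>
     (\<forall>i h. (n \<le> i \<or> n \<le> h) \<longrightarrow> M i h = 0) \<and>
     (\<forall>i<n. (\<Sum>h<n. M i h) = 1) \<and>
     (\<forall>h<n. (\<Sum>i<n. M i h) = 1)"

definition deterministic_assignment :: "nat \<Rightarrow> (nat \<Rightarrow> nat \<Rightarrow> real) \<Rightarrow> bool" where
  "deterministic_assignment n M \<longleftrightarrow>
     random_assignment n M \<and> (\<forall>i h. M i h \<in> {0, 1})"

definition efficient_at :: "nat \<Rightarrow> (nat \<Rightarrow> (nat \<times> nat) set) \<Rightarrow> (nat \<Rightarrow> nat \<Rightarrow> real) \<Rightarrow> bool" where
  "efficient_at n R M \<longleftrightarrow>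
     deterministic_assignment n M \<and>
     \<not> (\<exists>M'. deterministic_assignment n M' \<and> M' \<noteq> M \<and>
          (\<forall>i<n. \<forall>h<n. \<forall>h'<n. h \<noteq> h' \<and> M' i h' = 1 \<and> M i h = 1 \<longrightarrow> (h', h) \<in> R i))"

definition ex_post_efficient ::
  "nat \<Rightarrow> ((nat \<Rightarrow> (nat \<times> nat) set) \<Rightarrow> nat \<Rightarrow> nat \<Rightarrow> real) \<Rightarrow> bool" where
  "ex_post_efficient n f \<longleftrightarrow>
     (\<forall>R\<in>profiles n. \<exists>S (w::(nat \<Rightarrow> nat \<Rightarrow> real) \<Rightarrow> real).
        finite S \<and> S \<subseteq> {D. efficient_at n R D} \<and>
        (\<forall>D\<in>S. 0 \<le> w D) \<and> (\<Sum>D\<in>S. w D) = 1 \<and>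
        (\<forall>i h. f R i h = (\<Sum>D\<in>S. w D * D i h)))"

definition top_house :: "(nat \<times> nat) set \<Rightarrow> nat set \<Rightarrow> nat" where
  "top_house r A = (THE h. h \<in> A \<and> (\<forall>h'\<in>A. h' \<noteq> h \<longrightarrow> (h, h') \<in> r))"

fun sd :: "(nat \<Rightarrow> (nat \<times> nat) set) \<Rightarrow> nat list \<Rightarrow> nat set \<Rightarrow> nat \<Rightarrow> nat \<Rightarrow> real" where
  "sd R [] A = (\<lambda>i h. 0)"
| "sd R (i # \<pi>) A =
     (let h = top_house (R i) A
      in (sd R \<pi> (A - {h}))(i := (\<lambda>h'. if h' = h then 1 else 0)))"

definition SD :: "nat \<Rightarrow> nat list \<Rightarrow> (nat \<Rightarrow> (nat \<times> nat) set) \<Rightarrow> nat \<Rightarrow> nat \<Rightarrow> real" where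
  "SD n \<pi> R = sd R \<pi> {..<n}"

definition RSD :: "nat \<Rightarrow> (nat \<Rightarrow> (nat \<times> nat) set) \<Rightarrow> nat \<Rightarrow> nat \<Rightarrow> real" where
  "RSD n R i h = (\<Sum>\<pi>\<in>permutations_of_set {..<n}. SD n \<pi> R i h) / fact n"

definition support_efficient ::
  "nat \<Rightarrow> ((nat \<Rightarrow> (nat \<times> nat) set) \<Rightarrow> nat \<Rightarrow> nat \<Rightarrow> real) \<Rightarrow> bool" where
  "support_efficient n f \<longleftrightarrow>
     (\<forall>R\<in>profiles n. \<forall>i h. RSD n R i h = 0 \<longrightarrow> f R i h = 0)"

definition assignment_rule ::
  "nat \<Rightarrow> ((nat \<Rightarrow> (nat \<times> nat) set) \<Rightarrow> nat \<Rightarrow> nat \<Rightarrow> real) \<Rightarrow> bool" where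
  "assignment_rule n f \<longleftrightarrow> (\<forall>R\<in>profiles n. random_assignment n (f R))"

end

theory Submission
  imports Defs
begin

text \<open>Deterministic assignments are exactly the permutation matrices, and for \<open>n \<le> 3\<close> every
bistochastic matrix is an explicit convex combination of permutation matrices. Both properties
of a rule therefore reduce to one statement about a permutation \<open>\<sigma>\<close> at a profile: \<open>\<sigma>\<close> is
Pareto efficient iff every agent \<open>i\<close> gets a house \<open>\<sigma> i\<close> that some serial dictatorship gives
to \<open>i\<close>, i.e. one in the support of RSD. Once preferences are encoded as ranking lists, this is
a finite statement about all profiles with at most three agents, decided by evaluation.\<close>

section \<open>Preferences as ranking lists\<close>

fun ordered_pairs :: "'a list \<Rightarrow> ('a \<times> 'a) list" where
  "ordered_pairs [] = []"
| "ordered_pairs (x # xs) = map (Pair x) xs @ ordered_pairs xs"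

definition first_in :: "'a list \<Rightarrow> 'a set \<Rightarrow> 'a" where
  "first_in xs A = hd (filter (\<lambda>x. x \<in> A) xs)"

lemma set_ordered_pairs_subset: "set (ordered_pairs xs) \<subseteq> set xs \<times> set xs"
  by (induction xs) auto

lemma ordered_pairs_asym:
  "distinct xs \<Longrightarrow> (a, b) \<in> set (ordered_pairs xs) \<Longrightarrow> (b, a) \<notin> set (ordered_pairs xs)"
  by (induction xs) (use set_ordered_pairs_subset in fastforce)+

lemma first_in_ranking:
  assumes "distinct xs" "A \<subseteq> set xs" "A \<noteq> {}"
  shows "first_in xs A \<in> A \<and>
    (\<forall>h\<in>A. h \<noteq> first_in xs A \<longrightarrow> (first_in xs A, h) \<in> set (ordered_pairs xs))"
  using assms
proof (induction xs)
  case (Cons x xs)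
  show ?case
  proof (cases "x \<in> A")
    case True
    then show ?thesis using Cons.prems(2) by (auto simp: first_in_def)
  next
    case False
    then have "first_in (x # xs) A = first_in xs A" by (simp add: first_in_def)
    moreover have "A \<subseteq> set xs" "distinct xs" using Cons.prems(1,2) False by auto
    ultimately show ?thesis using Cons.IH Cons.prems(3) by auto
  qed
qed simp

lemma top_house_ordered_pairs:
  assumes "distinct xs" "A \<subseteq> set xs" "A \<noteq> {}"
  shows "top_house (set (ordered_pairs xs)) A = first_in xs A"
  unfolding top_house_def
proof (rule the_equality)
  show "first_in xs A \<in> A \<and>
      (\<forall>h\<in>A. h \<noteq> first_in xs A \<longrightarrow> (first_in xs A, h) \<in> set (ordered_pairs xs))"
    using first_in_ranking[OF assms] .
  fix h assume h: "h \<in> A \<and> (\<forall>h'\<in>A. h' \<noteq> h \<longrightarrow> (h, h') \<in> set (ordered_pairs xs))"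
  show "h = first_in xs A"
  proof (rule ccontr)
    assume "h \<noteq> first_in xs A"
    then have "(first_in xs A, h) \<in> set (ordered_pairs xs)" "(h, first_in xs A) \<in> set (ordered_pairs xs)"
      using first_in_ranking[OF assms] h by auto
    then show False using ordered_pairs_asym[OF assms(1)] by blast
  qed
qed

lemma strict_linear_order_top:
  assumes "finite A" "r \<subseteq> A \<times> A" "trans r" "irrefl r" "total_on A r" "A \<noteq> {}"
  shows "\<exists>m\<in>A. \<forall>y\<in>A. y \<noteq> m \<longrightarrow> (m, y) \<in> r"
proof -
  have "wf r"
  proof (rule finite_acyclic_wf)
    show "finite r" using assms(1,2) finite_subset by blast
    show "acyclic r" using assms(3,4) by (simp add: acyclic_def irrefl_def)
  qed
  then obtain m where "m \<in> A" "\<And>y. (y, m) \<in> r \<Longrightarrow> y \<notin> A"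
    using wfE_min assms(6) by (metis equals0I)
  then show ?thesis using assms(5) unfolding total_on_def by blast
qed

lemma ranking_of_strict_linear_order:
  assumes "finite A" "r \<subseteq> A \<times> A" "trans r" "irrefl r" "total_on A r"
  shows "\<exists>xs. distinct xs \<and> set xs = A \<and> r = set (ordered_pairs xs)"
  using assms
proof (induction "card A" arbitrary: A r)
  case 0
  then show ?case by auto
next
  case (Suc k)
  then have "A \<noteq> {}" by auto
  then obtain m where m: "m \<in> A" "\<forall>y\<in>A. y \<noteq> m \<longrightarrow> (m, y) \<in> r"
    using strict_linear_order_top[OF Suc.prems] by blast
  define A' where "A' = A - {m}"
  define r' where "r' = r \<inter> (A' \<times> A')"
  have "k = card A'" "finite A'"
    using Suc.hyps(2) Suc.prems(1) m(1) by (simp_all add: A'_def)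
  moreover have "r' \<subseteq> A' \<times> A'" "trans r'" "irrefl r'" "total_on A' r'"
    using Suc.prems(3-5) unfolding r'_def trans_def irrefl_def total_on_def A'_def by blast+
  ultimately obtain xs where xs: "distinct xs" "set xs = A'" "r' = set (ordered_pairs xs)"
    using Suc.hyps(1) by blast
  have "(a, b) \<in> Pair m ` A' \<union> r'" if ab: "(a, b) \<in> r" for a b
  proof -
    have "a \<in> A" "b \<in> A" "a \<noteq> b"
      using ab Suc.prems(2,4) by (auto simp: irrefl_def)
    moreover have "b \<noteq> m"
    proof
      assume "b = m"
      then have "(a, a) \<in> r"
        using ab m \<open>a \<in> A\<close> \<open>a \<noteq> b\<close> Suc.prems(3) unfolding trans_def by blast
      then show False using Suc.prems(4) by (simp add: irrefl_def)
    qed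
    ultimately show ?thesis using ab by (auto simp: A'_def r'_def)
  qed
  then have "r = Pair m ` A' \<union> r'"
    using m by (auto simp: A'_def r'_def)
  then have "r = set (ordered_pairs (m # xs))"
    using xs(2,3) by simp
  moreover have "distinct (m # xs)" "set (m # xs) = A"
    using xs(1,2) m(1) by (auto simp: A'_def)
  ultimately show ?case by blast
qed

lemma profile_rankings:
  assumes "R \<in> profiles n"
  obtains p where "length p = n"
    "\<And>i. i < n \<Longrightarrow> p ! i \<in> permutations_of_set {..<n} \<and> R i = set (ordered_pairs (p ! i))"
proof -
  have "\<exists>xs. xs \<in> permutations_of_set {..<n} \<and> R i = set (ordered_pairs xs)" if "i < n" for i
    using assms that ranking_of_strict_linear_order[of "{..<n}" "R i"]
    unfolding profiles_def strict_pref_def strict_linear_order_on_def permutations_of_set_def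
    by auto
  then obtain g where "\<And>i. i < n \<Longrightarrow> g i \<in> permutations_of_set {..<n} \<and> R i = set (ordered_pairs (g i))"
    by metis
  then show ?thesis by (intro that[of "map g [0..<n]"]) auto
qed

fun sd_ranked :: "nat list list \<Rightarrow> nat list \<Rightarrow> nat set \<Rightarrow> nat \<Rightarrow> nat \<Rightarrow> bool" where
  "sd_ranked p [] A = (\<lambda>i h. False)"
| "sd_ranked p (i # \<pi>) A =
     (let h = first_in (p ! i) A in (sd_ranked p \<pi> (A - {h}))(i := (\<lambda>h'. h' = h)))"

lemma sd_eq_sd_ranked:
  assumes "\<forall>i\<in>set \<pi>. R i = set (ordered_pairs (p ! i)) \<and> distinct (p ! i) \<and> set (p ! i) = B"
    and "A \<subseteq> B" "length \<pi> \<le> card A" "finite A"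
  shows "sd R \<pi> A = (\<lambda>i h. of_bool (sd_ranked p \<pi> A i h))"
  using assms
proof (induction \<pi> arbitrary: A)
  case (Cons i \<pi>)
  have "A \<noteq> {}" using Cons.prems(3,4) by auto
  have p: "distinct (p ! i)" "A \<subseteq> set (p ! i)" using Cons.prems(1,2) by auto
  have top: "top_house (R i) A = first_in (p ! i) A"
    using top_house_ordered_pairs[OF p \<open>A \<noteq> {}\<close>] Cons.prems(1) by simp
  have "first_in (p ! i) A \<in> A" using first_in_ranking[OF p \<open>A \<noteq> {}\<close>] by blast
  then have "length \<pi> \<le> card (A - {first_in (p ! i) A})"
    using Cons.prems(3,4) by simp
  then have "sd R \<pi> (A - {first_in (p ! i) A}) =
      (\<lambda>j h. of_bool (sd_ranked p \<pi> (A - {first_in (p ! i) A}) j h))"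
    using Cons.prems by (intro Cons.IH) auto
  then show ?case by (auto simp: top Let_def fun_eq_iff)
qed simp

lemma RSD_neq_0_iff:
  assumes "\<forall>i<n. R i = set (ordered_pairs (p ! i)) \<and> p ! i \<in> permutations_of_set {..<n}"
  shows "RSD n R i h \<noteq> 0 \<longleftrightarrow> (\<exists>\<pi>\<in>permutations_of_set {..<n}. sd_ranked p \<pi> {..<n} i h)"
proof -
  have "SD n \<pi> R i h = of_bool (sd_ranked p \<pi> {..<n} i h)" if "\<pi> \<in> permutations_of_set {..<n}" for \<pi>
  proof -
    have "length \<pi> = n" "set \<pi> = {..<n}"
      using that length_finite_permutations_of_set permutations_of_setD by fastforce+
    then have "sd R \<pi> {..<n} = (\<lambda>i h. of_bool (sd_ranked p \<pi> {..<n} i h))"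
      using assms by (intro sd_eq_sd_ranked[where B = "{..<n}"]) (auto simp: permutations_of_set_def)
    then show ?thesis by (simp add: SD_def)
  qed
  then have "RSD n R i h = card {\<pi> \<in> permutations_of_set {..<n}. sd_ranked p \<pi> {..<n} i h} / fact n"
    by (simp add: RSD_def Int_def)
  then show ?thesis by auto
qed

definition perm_matrix :: "nat list \<Rightarrow> nat \<Rightarrow> nat \<Rightarrow> real" where
  "perm_matrix \<sigma> i h = of_bool (i < length \<sigma> \<and> h = \<sigma> ! i)"

lemma perm_matrix_eq_1_iff: "perm_matrix \<sigma> i h = 1 \<longleftrightarrow> i < length \<sigma> \<and> h = \<sigma> ! i"
  by (simp add: perm_matrix_def)

lemma perm_matrix_inj:
  assumes "length \<sigma> = length \<tau>" "perm_matrix \<sigma> = perm_matrix \<tau>"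
  shows "\<sigma> = \<tau>"
proof (rule nth_equalityI)
  fix i assume "i < length \<sigma>"
  then have "perm_matrix \<sigma> i (\<sigma> ! i) = 1" by (simp add: perm_matrix_eq_1_iff)
  then have "perm_matrix \<tau> i (\<sigma> ! i) = 1" using assms(2) by simp
  then show "\<sigma> ! i = \<tau> ! i" by (simp add: perm_matrix_eq_1_iff)
qed (rule assms(1))

lemma deterministic_assignment_perm_matrix:
  assumes "\<sigma> \<in> permutations_of_set {..<n}"
  shows "deterministic_assignment n (perm_matrix \<sigma>)"
proof -
  have \<sigma>: "length \<sigma> = n" "set \<sigma> = {..<n}" "distinct \<sigma>"
    using assms length_finite_permutations_of_set permutations_of_setD by fastforce+
  then have lt: "\<sigma> ! i < n" if "i < n" for i using that nth_mem by blast
  have rows: "(\<Sum>h<n. perm_matrix \<sigma> i h) = 1" if "i < n" for i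
  proof -
    have "{..<n} \<inter> {h. i < n \<and> h = \<sigma> ! i} = {\<sigma> ! i}"
      using lt that by auto
    then show ?thesis by (simp add: perm_matrix_def \<sigma>(1))
  qed
  have cols: "(\<Sum>i<n. perm_matrix \<sigma> i h) = 1" if "h < n" for h
  proof -
    have "h \<in> set \<sigma>" using that \<sigma>(2) by simp
    then obtain j where j: "j < n" "\<sigma> ! j = h"
      by (metis in_set_conv_nth \<sigma>(1))
    have "i = j" if "i < n" "\<sigma> ! i = h" for i
      using nth_eq_iff_index_eq[OF \<sigma>(3)] that j \<sigma>(1) by metis
    then have "{..<n} \<inter> {i. h = \<sigma> ! i} = {j}"
      using j by blast
    then show ?thesis by (simp add: perm_matrix_def \<sigma>(1))
  qed
  have "perm_matrix \<sigma> i h = 0" if "n \<le> i \<or> n \<le> h" for i h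
    using that lt[of i] by (auto simp: perm_matrix_def \<sigma>(1))
  then show ?thesis
    unfolding deterministic_assignment_def random_assignment_def
    using rows cols by (simp add: perm_matrix_def)
qed

lemma sum_zero_one_eq_1_ex1:
  fixes g :: "'a \<Rightarrow> real"
  assumes "finite A" "\<forall>x\<in>A. g x \<in> {0, 1}" "sum g A = 1"
  shows "\<exists>!x. x \<in> A \<and> g x = 1"
proof -
  have "sum g A = (\<Sum>x\<in>A. of_bool (g x = 1))"
    using assms(2) by (intro sum.cong) auto
  then have "card (A \<inter> {x. g x = 1}) = 1"
    using assms(1,3) by simp
  then obtain x where x: "A \<inter> {x. g x = 1} = {x}"
    by (auto simp: card_1_singleton_iff)
  show ?thesis
  proof (rule ex1I[where a = x])
    show "x \<in> A \<and> g x = 1" using x by blast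
    show "y = x" if "y \<in> A \<and> g y = 1" for y using x that by blast
  qed
qed

lemma deterministic_assignment_imp_perm_matrix:
  assumes "deterministic_assignment n D"
  obtains \<sigma> where "\<sigma> \<in> permutations_of_set {..<n}" "D = perm_matrix \<sigma>"
proof -
  have D01: "\<forall>i h. D i h \<in> {0, 1}" and outside: "\<forall>i h. n \<le> i \<or> n \<le> h \<longrightarrow> D i h = 0"
    and rows: "\<forall>i<n. (\<Sum>h<n. D i h) = 1" and cols: "\<forall>h<n. (\<Sum>i<n. D i h) = 1"
    using assms unfolding deterministic_assignment_def random_assignment_def by auto
  have row1: "\<exists>!h. h < n \<and> D i h = 1" if "i < n" for i
    using sum_zero_one_eq_1_ex1[of "{..<n}" "D i"] D01 rows that by simp
  have col1: "\<exists>!i. i < n \<and> D i h = 1" if "h < n" for h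
    using sum_zero_one_eq_1_ex1[of "{..<n}" "\<lambda>i. D i h"] D01 cols that by simp
  define s where "s i = (THE h. h < n \<and> D i h = 1)" for i
  have s: "s i < n \<and> D i (s i) = 1" if "i < n" for i
    unfolding s_def using theI'[OF row1[OF that]] .
  define \<sigma> where "\<sigma> = map s [0..<n]"
  have "inj_on s {..<n}"
  proof (rule inj_onI)
    fix i j assume "i \<in> {..<n}" "j \<in> {..<n}" "s i = s j"
    then show "i = j" using s[of i] s[of j] col1[of "s i"] by auto
  qed
  then have "distinct \<sigma>" by (simp add: \<sigma>_def distinct_map atLeast_upt)
  moreover have "set \<sigma> = {..<n}"
  proof -
    have "h \<in> s ` {..<n}" if h: "h < n" for h
    proof -
      obtain i where "i < n" "D i h = 1" using col1[OF h] by blast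
      then have "h = s i" using row1[of i] s[of i] h by blast
      then show ?thesis using \<open>i < n\<close> by blast
    qed
    then show ?thesis using s by (auto simp: \<sigma>_def atLeast_upt)
  qed
  ultimately have "\<sigma> \<in> permutations_of_set {..<n}" by (simp add: permutations_of_set_def)
  moreover have "D = perm_matrix \<sigma>"
  proof (intro ext)
    fix i h
    show "D i h = perm_matrix \<sigma> i h"
    proof (cases "i < n \<and> h < n")
      case True
      then have "D i h = 1 \<longleftrightarrow> h = s i" using row1[of i] s[of i] by blast
      then show ?thesis using D01 True by (auto simp: perm_matrix_def \<sigma>_def)
    next
      case False
      then show ?thesis using outside s[of i] by (auto simp: perm_matrix_def \<sigma>_def)
    qed
  qed
  ultimately show ?thesis using that by blast
qed

section \<open>Birkhoff decomposition for at most three agents\<close>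

definition perm_combination :: "nat \<Rightarrow> (nat list \<Rightarrow> real) \<Rightarrow> nat \<Rightarrow> nat \<Rightarrow> real" where
  "perm_combination n v = (\<lambda>i h. \<Sum>\<sigma>\<in>permutations_of_set {..<n}. v \<sigma> * perm_matrix \<sigma> i h)"

lemma eq_perm_combinationI:
  assumes "random_assignment n M"
    and "\<And>i h. i < n \<Longrightarrow> h < n \<Longrightarrow> M i h = perm_combination n v i h"
  shows "M = perm_combination n v"
proof (intro ext)
  fix i h
  show "M i h = perm_combination n v i h"
  proof (cases "i < n \<and> h < n")
    case False
    then have "M i h = 0" using assms(1) by (auto simp: random_assignment_def)
    moreover have "perm_matrix \<sigma> i h = 0" if "\<sigma> \<in> permutations_of_set {..<n}" for \<sigma>
      using deterministic_assignment_perm_matrix[OF that] False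
      by (auto simp: deterministic_assignment_def random_assignment_def)
    ultimately show ?thesis by (simp add: perm_combination_def)
  qed (use assms(2) in auto)
qed

lemma weight_le_perm_combination:
  assumes "\<forall>\<tau>\<in>permutations_of_set {..<n}. 0 \<le> v \<tau>" "\<sigma> \<in> permutations_of_set {..<n}" "i < n"
  shows "v \<sigma> \<le> perm_combination n v i (\<sigma> ! i)"
proof -
  have "length \<sigma> = n" using assms(2) length_finite_permutations_of_set by fastforce
  then have "v \<sigma> = v \<sigma> * perm_matrix \<sigma> i (\<sigma> ! i)" using assms(3) by (simp add: perm_matrix_def)
  also have "\<dots> \<le> perm_combination n v i (\<sigma> ! i)"
    unfolding perm_combination_def
    by (rule member_le_sum) (use assms(1,2) in \<open>auto simp: perm_matrix_def\<close>)
  finally show ?thesis .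
qed

lemma permutations_of_lessThan_2: "permutations_of_set {..<2::nat} = {[0, 1], [1, 0]}"
  unfolding atLeast_upt[symmetric] by code_simp

lemma permutations_of_lessThan_3:
  "permutations_of_set {..<3::nat} = {[0, 1, 2], [0, 2, 1], [1, 0, 2], [1, 2, 0], [2, 0, 1], [2, 1, 0]}"
  unfolding atLeast_upt[symmetric] by code_simp

lemma birkhoff_2:
  assumes "random_assignment 2 M"
  obtains v where "\<forall>\<sigma>\<in>permutations_of_set {..<2}. 0 \<le> v \<sigma>"
    "(\<Sum>\<sigma>\<in>permutations_of_set {..<2}. v \<sigma>) = 1" "M = perm_combination 2 v"
proof -
  have "M 0 0 + M 0 1 = 1" "M 1 0 + M 1 1 = 1" "M 0 0 + M 1 0 = 1" "M 0 1 + M 1 1 = 1"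
    and "0 \<le> M 0 0" "0 \<le> M 0 1"
    using assms by (auto simp: random_assignment_def numeral_2_eq_2)
  define v where "v \<sigma> = (if \<sigma> = [0, 1] then M 0 0 else M 0 1)" for \<sigma> :: "nat list"
  have "M i h = perm_combination 2 v i h" if "i < 2" "h < 2" for i h
  proof -
    have "i = 0 \<or> i = 1" "h = 0 \<or> h = 1" using that by auto
    then show ?thesis
      using \<open>M 0 0 + M 0 1 = 1\<close> \<open>M 1 0 + M 1 1 = 1\<close> \<open>M 0 0 + M 1 0 = 1\<close> \<open>M 0 1 + M 1 1 = 1\<close>
      by (auto simp: perm_combination_def permutations_of_lessThan_2 perm_matrix_def v_def)
  qed
  then show ?thesis
    using that[of v] eq_perm_combinationI[OF assms] \<open>0 \<le> M 0 0\<close> \<open>0 \<le> M 0 1\<close> \<open>M 0 0 + M 0 1 = 1\<close>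
    by (simp add: permutations_of_lessThan_2 v_def)
qed

lemma birkhoff_3:
  assumes "random_assignment 3 M"
  obtains v where "\<forall>\<sigma>\<in>permutations_of_set {..<3}. 0 \<le> v \<sigma>"
    "(\<Sum>\<sigma>\<in>permutations_of_set {..<3}. v \<sigma>) = 1" "M = perm_combination 3 v"
proof -
  have M: "0 \<le> M i h" "i < 3 \<Longrightarrow> (\<Sum>h<3. M i h) = 1" "h < 3 \<Longrightarrow> (\<Sum>i<3. M i h) = 1" for i h
    using assms by (auto simp: random_assignment_def)
  have sums: "M 0 0 + M 0 1 + M 0 2 = 1" "M 1 0 + M 1 1 + M 1 2 = 1" "M 2 0 + M 2 1 + M 2 2 = 1"
    "M 0 0 + M 1 0 + M 2 0 = 1" "M 0 1 + M 1 1 + M 2 1 = 1" "M 0 2 + M 1 2 + M 2 2 = 1"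
    using M(2)[of 0] M(2)[of 1] M(2)[of 2] M(3)[of 0] M(3)[of 1] M(3)[of 2]
    by (simp_all add: eval_nat_numeral)
  \<comment> \<open>The six permutation matrices satisfy one linear relation (the even ones and the odd ones
    both sum to the all-ones matrix), so the weights reproducing \<open>M\<close> form a one-parameter family,
    parametrised by the weight \<open>t\<close> of the identity; \<open>t\<close> is the least value for which the
    identity and the two 3-cycles get nonnegative weight.\<close>
  define t where "t = max 0 (max (M 0 0 - M 1 2) (M 0 0 - M 2 1))"
  define v where "v \<sigma> =
    (if \<sigma> = [0, 1, 2] then t else if \<sigma> = [1, 2, 0] then M 1 2 - M 0 0 + t
     else if \<sigma> = [2, 0, 1] then M 2 1 - M 0 0 + t else if \<sigma> = [0, 2, 1] then M 0 0 - t
     else if \<sigma> = [2, 1, 0] then M 1 1 - t else M 2 2 - t)" for \<sigma> :: "nat list"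
  have "t = 0 \<or> t = M 0 0 - M 1 2 \<or> t = M 0 0 - M 2 1"
    "0 \<le> t" "M 0 0 - M 1 2 \<le> t" "M 0 0 - M 2 1 \<le> t"
    unfolding t_def by auto
  then have "\<forall>\<sigma>\<in>permutations_of_set {..<3}. 0 \<le> v \<sigma>"
    using sums M(1) by (simp add: permutations_of_lessThan_3 v_def) (elim disjE; smt (verit))
  moreover have "(\<Sum>\<sigma>\<in>permutations_of_set {..<3}. v \<sigma>) = 1"
    using sums by (simp add: permutations_of_lessThan_3 v_def)
  moreover have "M i h = perm_combination 3 v i h" if "i < 3" "h < 3" for i h
  proof -
    have "i = 0 \<or> i = 1 \<or> i = 2" "h = 0 \<or> h = 1 \<or> h = 2" using that by auto
    then show ?thesis
      using sums by (elim disjE) (simp_all add: perm_combination_def permutations_of_lessThan_3 perm_matrix_def v_def)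
  qed
  ultimately show ?thesis using that eq_perm_combinationI[OF assms] by blast
qed

lemma birkhoff_le_3:
  assumes "n \<le> 3" "random_assignment n M"
  obtains v where "\<forall>\<sigma>\<in>permutations_of_set {..<n}. 0 \<le> v \<sigma>"
    "(\<Sum>\<sigma>\<in>permutations_of_set {..<n}. v \<sigma>) = 1" "M = perm_combination n v"
proof -
  consider "n = 0" | "n = 1" | "n = 2" | "n = 3" using assms(1) by linarith
  then show ?thesis
  proof cases
    case 1
    then show ?thesis
      using that[of "\<lambda>_. 1"] eq_perm_combinationI[OF assms(2)] by simp
  next
    case 2
    then have "M 0 0 = 1" using assms(2) by (simp add: random_assignment_def)
    then have "M = perm_combination n (\<lambda>_. 1)"
      using 2 by (intro eq_perm_combinationI[OF assms(2)]) (simp add: perm_combination_def perm_matrix_def lessThan_Suc)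
    then show ?thesis using that[of "\<lambda>_. 1"] 2 by (simp add: lessThan_Suc)
  next
    case 3
    then show ?thesis using birkhoff_2 assms(2) that by blast
  next
    case 4
    then show ?thesis using birkhoff_3 assms(2) that by blast
  qed
qed

section \<open>Efficiency and the support of RSD\<close>

text \<open>The following predicates on ranking lists quantify over \<open>set [0..<n]\<close> rather than
\<open>{..<n}\<close> so that they can be evaluated.\<close>

definition pareto_dominates :: "nat list list \<Rightarrow> nat list \<Rightarrow> nat list \<Rightarrow> bool" where
  "pareto_dominates p \<sigma>' \<sigma> \<longleftrightarrow> \<sigma>' \<noteq> \<sigma> \<and>
     (\<forall>i\<in>set [0..<length \<sigma>].
        \<sigma>' ! i \<noteq> \<sigma> ! i \<longrightarrow> (\<sigma>' ! i, \<sigma> ! i) \<in> set (ordered_pairs (p ! i)))"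

definition sd_supported :: "nat list list \<Rightarrow> nat list \<Rightarrow> bool" where
  "sd_supported p \<sigma> \<longleftrightarrow> (\<forall>i\<in>set [0..<length \<sigma>].
     \<exists>\<pi>\<in>permutations_of_set (set [0..<length \<sigma>]).
       sd_ranked p \<pi> (set [0..<length \<sigma>]) i (\<sigma> ! i))"

definition efficiency_is_sd_support :: "nat \<Rightarrow> bool" where
  "efficiency_is_sd_support n \<longleftrightarrow>
     (\<forall>p\<in>set (List.n_lists n (permutations_of_set_list [0..<n])).
        \<forall>\<sigma>\<in>permutations_of_set (set [0..<n]).
          \<not> (\<exists>\<sigma>'\<in>permutations_of_set (set [0..<n]). pareto_dominates p \<sigma>' \<sigma>) \<longleftrightarrow>
          sd_supported p \<sigma>)"

lemma efficiency_is_sd_support_le_3: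
  assumes "n \<le> 3"
  shows "efficiency_is_sd_support n"
proof -
  have "efficiency_is_sd_support 0" "efficiency_is_sd_support 1"
    "efficiency_is_sd_support 2" "efficiency_is_sd_support 3"
    by code_simp+
  moreover have "n = 0 \<or> n = 1 \<or> n = 2 \<or> n = 3" using assms by linarith
  ultimately show ?thesis by blast
qed

lemma perm_matrix_improvement_iff:
  assumes "\<sigma> \<in> permutations_of_set {..<n}" "\<sigma>' \<in> permutations_of_set {..<n}"
  shows "(\<forall>i<n. \<forall>h<n. \<forall>h'<n.
            h \<noteq> h' \<and> perm_matrix \<sigma>' i h' = 1 \<and> perm_matrix \<sigma> i h = 1 \<longrightarrow> (h', h) \<in> R i)
     \<longleftrightarrow> (\<forall>i<n. \<sigma>' ! i \<noteq> \<sigma> ! i \<longrightarrow> (\<sigma>' ! i, \<sigma> ! i) \<in> R i)" (is "?lhs \<longleftrightarrow> ?rhs")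
proof
  have len: "length \<sigma> = n" "length \<sigma>' = n"
    using assms length_finite_permutations_of_set by fastforce+
  assume ?lhs
  show ?rhs
  proof (intro allI impI)
    fix i assume "i < n" "\<sigma>' ! i \<noteq> \<sigma> ! i"
    moreover have "\<sigma> ! i < n" "\<sigma>' ! i < n"
      using assms \<open>i < n\<close> len nth_mem permutations_of_setD(1) by fastforce+
    ultimately show "(\<sigma>' ! i, \<sigma> ! i) \<in> R i"
      using \<open>?lhs\<close> len by (simp add: perm_matrix_eq_1_iff)
  qed
next
  assume ?rhs
  show ?lhs
  proof (intro allI impI)
    fix i h h'
    assume "i < n" "h < n" "h' < n" "h \<noteq> h' \<and> perm_matrix \<sigma>' i h' = 1 \<and> perm_matrix \<sigma> i h = 1"
    then show "(h', h) \<in> R i"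
      using \<open>?rhs\<close> by (simp add: perm_matrix_eq_1_iff)
  qed
qed

lemma efficient_at_perm_matrix_iff:
  assumes R: "\<forall>i<n. R i = set (ordered_pairs (p ! i))" and \<sigma>: "\<sigma> \<in> permutations_of_set {..<n}"
  shows "efficient_at n R (perm_matrix \<sigma>) \<longleftrightarrow>
    \<not> (\<exists>\<sigma>'\<in>permutations_of_set {..<n}. pareto_dominates p \<sigma>' \<sigma>)"
proof -
  have len: "length \<tau> = n" if "\<tau> \<in> permutations_of_set {..<n}" for \<tau>
    using that length_finite_permutations_of_set by fastforce
  define improves where "improves M' \<longleftrightarrow>
    (\<forall>i<n. \<forall>h<n. \<forall>h'<n. h \<noteq> h' \<and> M' i h' = 1 \<and> perm_matrix \<sigma> i h = 1 \<longrightarrow> (h', h) \<in> R i)"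
    for M' :: "nat \<Rightarrow> nat \<Rightarrow> real"
  have dominates: "pareto_dominates p \<sigma>' \<sigma> \<longleftrightarrow> \<sigma>' \<noteq> \<sigma> \<and> improves (perm_matrix \<sigma>')"
    if \<sigma>': "\<sigma>' \<in> permutations_of_set {..<n}" for \<sigma>'
    using perm_matrix_improvement_iff[OF \<sigma> \<sigma>', of R] R len[OF \<sigma>]
    by (simp add: improves_def pareto_dominates_def atLeast0LessThan Ball_def)
  have "(\<exists>M'. deterministic_assignment n M' \<and> M' \<noteq> perm_matrix \<sigma> \<and> improves M')
    \<longleftrightarrow> (\<exists>\<sigma>'\<in>permutations_of_set {..<n}. pareto_dominates p \<sigma>' \<sigma>)" (is "?lhs \<longleftrightarrow> ?rhs")
  proof
    assume ?lhs
    then obtain M' where M': "deterministic_assignment n M'" "M' \<noteq> perm_matrix \<sigma>" "improves M'"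
      by blast
    then obtain \<sigma>' where "\<sigma>' \<in> permutations_of_set {..<n}" "M' = perm_matrix \<sigma>'"
      using deterministic_assignment_imp_perm_matrix by blast
    then show ?rhs using M'(2,3) dominates by blast
  next
    assume ?rhs
    then obtain \<sigma>' where \<sigma>': "\<sigma>' \<in> permutations_of_set {..<n}" "\<sigma>' \<noteq> \<sigma>" "improves (perm_matrix \<sigma>')"
      using dominates by blast
    then have "perm_matrix \<sigma>' \<noteq> perm_matrix \<sigma>"
      using perm_matrix_inj[of \<sigma>' \<sigma>] len[OF \<sigma>'(1)] len[OF \<sigma>] by auto
    then show ?lhs
      using \<sigma>'(3) deterministic_assignment_perm_matrix[OF \<sigma>'(1)] by blast
  qed
  then show ?thesis
    using deterministic_assignment_perm_matrix[OF \<sigma>] by (simp add: efficient_at_def improves_def)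
qed

lemma RSD_support_iff_sd_supported:
  assumes "\<forall>i<n. R i = set (ordered_pairs (p ! i)) \<and> p ! i \<in> permutations_of_set {..<n}"
    and "\<sigma> \<in> permutations_of_set {..<n}"
  shows "(\<forall>i<n. RSD n R i (\<sigma> ! i) \<noteq> 0) \<longleftrightarrow> sd_supported p \<sigma>"
proof -
  have "length \<sigma> = n"
    using assms(2) length_finite_permutations_of_set by fastforce
  then show ?thesis
    using RSD_neq_0_iff[OF assms(1)] by (simp add: sd_supported_def atLeast0LessThan Ball_def)
qed

lemma efficient_iff_RSD_support:
  assumes "n \<le> 3" "R \<in> profiles n" "\<sigma> \<in> permutations_of_set {..<n}"
  shows "efficient_at n R (perm_matrix \<sigma>) \<longleftrightarrow> (\<forall>i<n. RSD n R i (\<sigma> ! i) \<noteq> 0)"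
proof -
  obtain p where p: "length p = n"
    "\<And>i. i < n \<Longrightarrow> p ! i \<in> permutations_of_set {..<n} \<and> R i = set (ordered_pairs (p ! i))"
    using profile_rankings[OF assms(2)] by blast
  have "set (permutations_of_set_list [0..<n]) = permutations_of_set {..<n}"
    using permutations_of_list[of "[0..<n]"] by (simp add: atLeast_upt)
  then have "p \<in> set (List.n_lists n (permutations_of_set_list [0..<n]))"
    using p by (auto simp: set_n_lists in_set_conv_nth)
  then have "\<not> (\<exists>\<sigma>'\<in>permutations_of_set {..<n}. pareto_dominates p \<sigma>' \<sigma>) \<longleftrightarrow> sd_supported p \<sigma>"
    using efficiency_is_sd_support_le_3[OF assms(1)] assms(3)
    unfolding efficiency_is_sd_support_def atLeast_upt by blast
  also have "\<not> (\<exists>\<sigma>'\<in>permutations_of_set {..<n}. pareto_dominates p \<sigma>' \<sigma>) \<longleftrightarrow> efficient_at n R (perm_matrix \<sigma>)"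
    using efficient_at_perm_matrix_iff[OF _ assms(3), of R p] p(2) by blast
  also have "sd_supported p \<sigma> \<longleftrightarrow> (\<forall>i<n. RSD n R i (\<sigma> ! i) \<noteq> 0)"
    using RSD_support_iff_sd_supported[OF _ assms(3), of R p] p(2) by blast
  finally show ?thesis .
qed

lemma efficient_at_vanishes_off_RSD_support:
  assumes "n \<le> 3" "R \<in> profiles n" "efficient_at n R D" "RSD n R i h = 0"
  shows "D i h = 0"
proof -
  obtain \<sigma> where \<sigma>: "\<sigma> \<in> permutations_of_set {..<n}" "D = perm_matrix \<sigma>"
    using assms(3) deterministic_assignment_imp_perm_matrix unfolding efficient_at_def by blast
  then have "length \<sigma> = n" "\<forall>i<n. RSD n R i (\<sigma> ! i) \<noteq> 0"
    using length_finite_permutations_of_set efficient_iff_RSD_support[OF assms(1,2)] assms(3)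
    by fastforce+
  then show ?thesis using assms(4) \<sigma>(2) by (auto simp: perm_matrix_def)
qed

section \<open>Ex post efficiency and support efficiency\<close>

lemma convex_combination_regroup:
  fixes v :: "'t \<Rightarrow> real" and P :: "'t \<Rightarrow> 'a \<Rightarrow> 'b \<Rightarrow> real"
  assumes fin: "finite T" and nonneg: "\<forall>t\<in>T. 0 \<le> v t" and sum1: "(\<Sum>t\<in>T. v t) = 1"
    and M: "M = (\<lambda>i h. \<Sum>t\<in>T. v t * P t i h)" and Q: "\<And>t. t \<in> T \<Longrightarrow> 0 < v t \<Longrightarrow> Q (P t)"
  shows "\<exists>S (w :: ('a \<Rightarrow> 'b \<Rightarrow> real) \<Rightarrow> real). finite S \<and> S \<subseteq> {D. Q D} \<and> (\<forall>D\<in>S. 0 \<le> w D) \<and>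
     (\<Sum>D\<in>S. w D) = 1 \<and> (\<forall>i h. M i h = (\<Sum>D\<in>S. w D * D i h))"
proof -
  define T' where "T' = {t \<in> T. 0 < v t}"
  define S where "S = P ` T'"
  define w where "w D = (\<Sum>t\<in>{t \<in> T'. P t = D}. v t)" for D
  have "finite T'" using fin by (simp add: T'_def)
  have regroup: "(\<Sum>t\<in>T. v t * g (P t)) = (\<Sum>D\<in>S. w D * g D)" for g :: "('a \<Rightarrow> 'b \<Rightarrow> real) \<Rightarrow> real"
  proof -
    have "(\<Sum>t\<in>T. v t * g (P t)) = (\<Sum>t\<in>T'. v t * g (P t))"
      using nonneg by (intro sum.mono_neutral_right[OF fin]) (auto simp: T'_def)
    also have "\<dots> = (\<Sum>D\<in>S. \<Sum>t\<in>{t \<in> T'. P t = D}. v t * g (P t))"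
      unfolding S_def by (rule sum.image_gen[OF \<open>finite T'\<close>])
    also have "\<dots> = (\<Sum>D\<in>S. w D * g D)"
      unfolding w_def sum_distrib_right by (intro sum.cong refl) auto
    finally show ?thesis .
  qed
  have "finite S" using \<open>finite T'\<close> by (simp add: S_def)
  moreover have "S \<subseteq> {D. Q D}" using Q by (auto simp: S_def T'_def)
  moreover have "\<forall>D\<in>S. 0 \<le> w D" using nonneg by (auto simp: w_def T'_def intro!: sum_nonneg)
  moreover have "(\<Sum>D\<in>S. w D) = 1" using regroup[of "\<lambda>_. 1"] sum1 by simp
  moreover have "M i h = (\<Sum>D\<in>S. w D * D i h)" for i h
    using regroup[of "\<lambda>D. D i h"] M by simp
  ultimately show ?thesis by blast
qed

lemma support_efficient_imp_ex_post_efficient: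
  assumes "n \<le> 3" "assignment_rule n f" "support_efficient n f"
  shows "ex_post_efficient n f"
  unfolding ex_post_efficient_def
proof
  fix R assume R: "R \<in> profiles n"
  then have "random_assignment n (f R)" using assms(2) by (simp add: assignment_rule_def)
  then obtain v where v: "\<forall>\<sigma>\<in>permutations_of_set {..<n}. 0 \<le> v \<sigma>"
    "(\<Sum>\<sigma>\<in>permutations_of_set {..<n}. v \<sigma>) = 1" "f R = perm_combination n v"
    using birkhoff_le_3[OF assms(1)] by blast
  have "efficient_at n R (perm_matrix \<sigma>)" if \<sigma>: "\<sigma> \<in> permutations_of_set {..<n}" "0 < v \<sigma>" for \<sigma>
  proof -
    have "f R i (\<sigma> ! i) \<noteq> 0" if "i < n" for i
      using weight_le_perm_combination[OF v(1) \<sigma>(1) that] v(3) \<sigma>(2) by simp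
    then have "\<forall>i<n. RSD n R i (\<sigma> ! i) \<noteq> 0"
      using assms(3) R unfolding support_efficient_def by blast
    then show ?thesis using efficient_iff_RSD_support[OF assms(1) R \<sigma>(1)] by blast
  qed
  then show "\<exists>S w. finite S \<and> S \<subseteq> {D. efficient_at n R D} \<and> (\<forall>D\<in>S. 0 \<le> w D) \<and>
      (\<Sum>D\<in>S. w D) = 1 \<and> (\<forall>i h. f R i h = (\<Sum>D\<in>S. w D * D i h))"
    using convex_combination_regroup[OF finite_permutations_of_set v(1,2) v(3)[unfolded perm_combination_def]]
    by blast
qed

lemma ex_post_efficient_imp_support_efficient:
  assumes "n \<le> 3" "ex_post_efficient n f"
  shows "support_efficient n f"
  unfolding support_efficient_def
proof (intro ballI allI impI)
  fix R i h assume R: "R \<in> profiles n" and RSD: "RSD n R i h = 0"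
  obtain S and w :: "(nat \<Rightarrow> nat \<Rightarrow> real) \<Rightarrow> real"
    where S: "S \<subseteq> {D. efficient_at n R D}" and f: "f R i h = (\<Sum>D\<in>S. w D * D i h)"
    using assms(2) R unfolding ex_post_efficient_def by meson
  have "D i h = 0" if "D \<in> S" for D
    using efficient_at_vanishes_off_RSD_support[OF assms(1) R _ RSD] S that by blast
  then have "(\<Sum>D\<in>S. w D * D i h) = 0" by (intro sum.neutral) simp
  then show "f R i h = 0" using f by simp
qed

theorem mainTheorem1:
  fixes n :: nat
    and f :: "(nat \<Rightarrow> (nat \<times> nat) set) \<Rightarrow> nat \<Rightarrow> nat \<Rightarrow> real"
  assumes "n \<le> 3"
    and "assignment_rule n f"
  shows "support_efficient n f \<longleftrightarrow> ex_post_efficient n f"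
  using assms support_efficient_imp_ex_post_efficient ex_post_efficient_imp_support_efficient by blast

end
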